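(* Let $(\tau,T)$ be a dynamic pricing process with $P(\tau<\infty)=1$ such that $T(\tau)$ solves the auxiliary stopping money problem \[\max_{X\in\mathcal{T}}\int_0^\infty P(X>y)\,dy\quad\text{s.t.}\quad \lambda\int_0^\infty w_-\big(P(X-s>y\mid X>s)\big)dy\le\theta\ \ \forall s \text{ with } P(X>s)>0.\] Then $(\tau,T)$ is an optimal dynamic pricing process.
   Context: Standing assumptions: $\theta>0$, $\lambda>0$; $w_+,w_-:[0,1]\to[0,1]$ strictly increasing, thrice differentiable, $w_\pm(0)=0$, $w_\pm(1)=1$, $w_\pm'(0)>1$, $w_\pm'(1)>1$, $w_\pm'''>0$. $\mathcal{T}$ is the set of nonnegative random variables whose CDF is the sum of a nondecreasing nonnegative absolutely continuous function and a nondecreasing nonnegative jump function. A cumulative payment function is $T:\mathbb{R}^+\to\mathbb{R}^+$ of the form $T(t)=\int_0^tf(s)ds+\sum_i1_{t_i<t}T_i$, with $f\ge0$ integrable and $(t_i),(T_i)$ countable sequences of nonnegative numbers, $t_i$ increasing. A stopping time is a random variable $\tau\in[0,\infty]$ whose CDF has the same kind of decomposition. A dynamic pricing process $(\tau,T)$ is DIR compatible if for every $s$ with $P(\tau>s)>0$, \[\theta\,w_+(P(\tau<\infty\mid\tau>s))-\lambda\int_0^\infty w_-\big(P(T(\tau)-T(s)>y\mid\tau>s)\big)dy\ge0;\] it is optimal if it is DIR compatible and maximizes $\int_0^\infty P(T(\tau)>y)dy$ among DIR compatible processes. *)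

theory Defs
  imports "HOL-Probability.Probability"
begin

definition weighting :: "(real \<Rightarrow> real) \<Rightarrow> bool" where
  "weighting w \<longleftrightarrow> strict_mono_on {0..1} w \<and> w 0 = 0 \<and> w 1 = 1 \<and>
     (\<forall>x\<in>{0..1}. 0 \<le> w x \<and> w x \<le> 1) \<and>
     (\<exists>w1 w2 w3. (\<forall>x\<in>{0..1}.
          (w has_real_derivative w1 x) (at x within {0..1}) \<and>
          (w1 has_real_derivative w2 x) (at x within {0..1}) \<and>
          (w2 has_real_derivative w3 x) (at x within {0..1}) \<and> w3 x > 0)
        \<and> w1 0 > 1 \<and> w1 1 > 1)"

definition abs_cont_fun :: "(real \<Rightarrow> real) \<Rightarrow> bool" where
  "abs_cont_fun G \<longleftrightarrow> (\<forall>\<epsilon>>0. \<exists>\<delta>>0. \<forall>(n::nat) (a::nat \<Rightarrow> real) b.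
      (\<forall>i<n. a i \<le> b i) \<and> (\<forall>i<n. \<forall>j<n. i \<noteq> j \<longrightarrow> b i \<le> a j \<or> b j \<le> a i) \<and>
      (\<Sum>i<n. b i - a i) < \<delta> \<longrightarrow> (\<Sum>i<n. \<bar>G (b i) - G (a i)\<bar>) < \<epsilon>)"

definition jump_fun :: "(real \<Rightarrow> real) \<Rightarrow> bool" where
  "jump_fun J \<longleftrightarrow> (\<exists>(x::nat \<Rightarrow> real) (\<alpha>::nat \<Rightarrow> real) (\<theta>::nat \<Rightarrow> real).
      (\<forall>n. 0 \<le> \<alpha> n) \<and> summable \<alpha> \<and> (\<forall>n. 0 \<le> \<theta> n \<and> \<theta> n \<le> 1) \<and>
      (\<forall>t. J t = (\<Sum>n. \<alpha> n * (if t < x n then 0 else if t = x n then \<theta> n else 1))))"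

definition cdf_decomp :: "(real \<Rightarrow> real) \<Rightarrow> bool" where
  "cdf_decomp F \<longleftrightarrow> (\<exists>G J. (\<forall>t. F t = G t + J t) \<and>
      mono G \<and> (\<forall>t. 0 \<le> G t) \<and> abs_cont_fun G \<and>
      mono J \<and> (\<forall>t. 0 \<le> J t) \<and> jump_fun J)"

definition in_calT :: "'a measure \<Rightarrow> ('a \<Rightarrow> real) \<Rightarrow> bool" where
  "in_calT M X \<longleftrightarrow> X \<in> borel_measurable M \<and> (\<forall>\<omega>\<in>space M. 0 \<le> X \<omega>) \<and>
     cdf_decomp (\<lambda>t. measure M {\<omega>\<in>space M. X \<omega> \<le> t})"

definition stopping_time_rv :: "'a measure \<Rightarrow> ('a \<Rightarrow> ereal) \<Rightarrow> bool" where
  "stopping_time_rv M \<tau> \<longleftrightarrow> \<tau> \<in> borel_measurable M \<and> (\<forall>\<omega>\<in>space M. 0 \<le> \<tau> \<omega>) \<and>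
     cdf_decomp (\<lambda>t. measure M {\<omega>\<in>space M. \<tau> \<omega> \<le> ereal t})"

text \<open>Cumulative payment functions (only the values on [0,\<infinity>) matter).\<close>
definition cum_pay :: "(real \<Rightarrow> real) \<Rightarrow> bool" where
  "cum_pay T \<longleftrightarrow> (\<exists>(f::real \<Rightarrow> real) (t::nat \<Rightarrow> real) (c::nat \<Rightarrow> real).
      (\<forall>s. 0 \<le> f s) \<and> set_integrable lborel {0..} f \<and>
      mono t \<and> (\<forall>i. 0 \<le> t i) \<and> (\<forall>i. 0 \<le> c i) \<and>
      (\<forall>x\<ge>0. summable (\<lambda>i. if t i < x then c i else 0) \<and>
         T x = (LBINT s:{0..x}. f s) + (\<Sum>i. if t i < x then c i else 0)))"

definition Tbar :: "(real \<Rightarrow> real) \<Rightarrow> ereal \<Rightarrow> ennreal" where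
  "Tbar T x = (if x = \<infinity> then (SUP t\<in>{0..}. ennreal (T t)) else ennreal (T (real_of_ereal x)))"

definition cond_prob :: "'a measure \<Rightarrow> 'a set \<Rightarrow> 'a set \<Rightarrow> real" where
  "cond_prob M A B = measure M (A \<inter> B) / measure M B"

definition dpp :: "'a measure \<Rightarrow> ('a \<Rightarrow> ereal) \<Rightarrow> (real \<Rightarrow> real) \<Rightarrow> bool" where
  "dpp M \<tau> T \<longleftrightarrow> stopping_time_rv M \<tau> \<and> cum_pay T"

definition dir_compat :: "'a measure \<Rightarrow> real \<Rightarrow> real \<Rightarrow> (real \<Rightarrow> real) \<Rightarrow> (real \<Rightarrow> real)
    \<Rightarrow> ('a \<Rightarrow> ereal) \<Rightarrow> (real \<Rightarrow> real) \<Rightarrow> bool" where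
  "dir_compat M \<theta> lam wp wm \<tau> T \<longleftrightarrow> (\<forall>s\<ge>0. measure M {\<omega>\<in>space M. \<tau> \<omega> > ereal s} > 0 \<longrightarrow>
      ennreal lam * (\<integral>\<^sup>+ y\<in>{0..}. ennreal (wm (cond_prob M
           {\<omega>\<in>space M. Tbar T (\<tau> \<omega>) - ennreal (T s) > ennreal y}
           {\<omega>\<in>space M. \<tau> \<omega> > ereal s})) \<partial>lborel)
      \<le> ennreal (\<theta> * wp (cond_prob M {\<omega>\<in>space M. \<tau> \<omega> < \<infinity>} {\<omega>\<in>space M. \<tau> \<omega> > ereal s})))"

definition revenue :: "'a measure \<Rightarrow> ('a \<Rightarrow> ereal) \<Rightarrow> (real \<Rightarrow> real) \<Rightarrow> ennreal" where
  "revenue M \<tau> T = (\<integral>\<^sup>+ y\<in>{0..}. ennreal (measure M {\<omega>\<in>space M. Tbar T (\<tau> \<omega>) > ennreal y}) \<partial>lborel)"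

definition optimal_dpp :: "'a measure \<Rightarrow> real \<Rightarrow> real \<Rightarrow> (real \<Rightarrow> real) \<Rightarrow> (real \<Rightarrow> real)
    \<Rightarrow> ('a \<Rightarrow> ereal) \<Rightarrow> (real \<Rightarrow> real) \<Rightarrow> bool" where
  "optimal_dpp M \<theta> lam wp wm \<tau> T \<longleftrightarrow> dpp M \<tau> T \<and> dir_compat M \<theta> lam wp wm \<tau> T \<and>
     (\<forall>\<tau>' T'. dpp M \<tau>' T' \<and> dir_compat M \<theta> lam wp wm \<tau>' T' \<longrightarrow> revenue M \<tau>' T' \<le> revenue M \<tau> T)"

definition aux_feasible :: "'a measure \<Rightarrow> real \<Rightarrow> real \<Rightarrow> (real \<Rightarrow> real) \<Rightarrow> ('a \<Rightarrow> real) \<Rightarrow> bool" where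
  "aux_feasible M \<theta> lam wm X \<longleftrightarrow> in_calT M X \<and>
     (\<forall>s\<ge>0. measure M {\<omega>\<in>space M. X \<omega> > s} > 0 \<longrightarrow>
        ennreal lam * (\<integral>\<^sup>+ y\<in>{0..}. ennreal (wm (cond_prob M
             {\<omega>\<in>space M. X \<omega> - s > y} {\<omega>\<in>space M. X \<omega> > s})) \<partial>lborel) \<le> ennreal \<theta>)"

definition aux_value :: "'a measure \<Rightarrow> ('a \<Rightarrow> real) \<Rightarrow> ennreal" where
  "aux_value M X = (\<integral>\<^sup>+ y\<in>{0..}. ennreal (measure M {\<omega>\<in>space M. X \<omega> > y}) \<partial>lborel)"

definition aux_solves :: "'a measure \<Rightarrow> real \<Rightarrow> real \<Rightarrow> (real \<Rightarrow> real) \<Rightarrow> ('a \<Rightarrow> real) \<Rightarrow> bool" where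
  "aux_solves M \<theta> lam wm X \<longleftrightarrow> aux_feasible M \<theta> lam wm X \<and>
     (\<forall>Y. aux_feasible M \<theta> lam wm Y \<longrightarrow> aux_value M Y \<le> aux_value M X)"

end

theory Submission
  imports Defs
begin

(*
  If tau is almost surely finite, then P(tau < infinity | tau > s) = 1, and the total payment
  X = T(tau) can exceed T(s) only after time s; hence the DIR condition at s follows from the
  auxiliary constraint for X at level T(s), and the revenue of (tau, T) equals the auxiliary
  value V(X) = int_0^infinity P(X > y) dy.

  Conversely, let (tau', T') be DIR compatible and Y = T'(tau'). Y is almost surely finite,
  since otherwise the weighted tail integral at s = 0 would be infinite; so the revenue of
  (tau', T') is V(Y). Y satisfies the auxiliary constraint at every level s: apply the DIR
  condition at the last time t with T'(t) <= s, where {Y > s} = {tau' > t} almost surely.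
  Y need not lie in the class of the auxiliary problem, so it is compared with X through
  Z = h * ceiling (alpha * Y / h), where 0 < alpha < 1 and h = (1 - alpha) * theta / lambda:
  Z takes values in a lattice, hence lies in the class; rounding delays the excess tails by at
  most h, which costs at most lambda * h = (1 - alpha) * theta in the constraint, so Z is
  feasible; and V(Z) >= alpha * V(Y). Thus alpha * V(Y) <= V(X) for every alpha < 1.
*)

lemma set_integral_Icc_mono_nonneg:
  fixes f :: "real \<Rightarrow> real"
  assumes "\<And>s. 0 \<le> f s" "set_integrable lborel {a..} f" "x \<le> y"
  shows "(LBINT s:{a..x}. f s) \<le> (LBINT s:{a..y}. f s)"
  unfolding set_lebesgue_integral_def
proof (rule integral_mono)
  have "integrable lborel (\<lambda>s. indicat_real {a..z} s *\<^sub>R f s)" for z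
    using set_integrable_subset[OF assms(2), of "{a..z}"] by (auto simp: set_integrable_def)
  then show "integrable lborel (\<lambda>s. indicat_real {a..x} s *\<^sub>R f s)"
    "integrable lborel (\<lambda>s. indicat_real {a..y} s *\<^sub>R f s)" by blast+
qed (use assms in \<open>auto split: split_indicator\<close>)

lemma set_integral_singleton: "(LBINT s:{a}. f s) = (0::real)" for a :: real
  unfolding set_lebesgue_integral_def
  by (rule integral_eq_zero_AE) (use AE_lborel_singleton[of a] in eventually_elim, simp add: indicator_def)

lemma emeasure_lborel_Ici: "emeasure lborel {a::real..} = top"
proof (rule ccontr)
  assume "emeasure lborel {a..} \<noteq> top"
  then have "emeasure lborel {a..} < top" by (simp add: top.not_eq_extremum)
  then obtain n :: nat where n: "emeasure lborel {a..} < of_nat n"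
    using ennreal_Ex_less_of_nat by blast
  have "emeasure lborel {a..a + real n} \<le> emeasure lborel {a..}"
    by (intro emeasure_mono) auto
  moreover have "emeasure lborel {a..a + real n} = of_nat n"
    by (simp add: ennreal_of_nat_eq_real_of_nat)
  ultimately show False using n by simp
qed

lemma nn_integral_Ici_le_shift_scale:
  fixes g \<psi> :: "real \<Rightarrow> real"
  assumes "0 < \<alpha>" "0 \<le> h" "\<psi> \<in> borel_measurable borel"
    and "\<And>y. 0 \<le> y \<Longrightarrow> y < h \<Longrightarrow> g y \<le> 1" and "\<And>y. h \<le> y \<Longrightarrow> g y \<le> \<psi> ((y - h) / \<alpha>)"
  shows "(\<integral>\<^sup>+ y\<in>{0..}. ennreal (g y) \<partial>lborel)
    \<le> ennreal h + ennreal \<alpha> * (\<integral>\<^sup>+ v\<in>{0..}. ennreal (\<psi> v) \<partial>lborel)"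
proof -
  define G where "G y = ennreal (\<psi> ((y - h) / \<alpha>)) * indicator {0..} ((y - h) / \<alpha>)" for y
  have [measurable]: "G \<in> borel_measurable borel" using assms(3) unfolding G_def by measurable
  have "(\<integral>\<^sup>+ y\<in>{0..}. ennreal (g y) \<partial>lborel) \<le> (\<integral>\<^sup>+ y. indicator {0..<h} y + G y \<partial>lborel)"
  proof (intro nn_integral_mono)
    fix y
    show "ennreal (g y) * indicator {0..} y \<le> indicator {0..<h} y + G y"
    proof (cases "y < h")
      case True
      then show ?thesis using assms(4)[of y] by (auto intro: add_increasing2 split: split_indicator)
    next
      case False
      then have "0 \<le> (y - h) / \<alpha>" using assms(1) by simp
      then show ?thesis using False assms(5)[of y] by (auto simp: G_def intro: ennreal_leI split: split_indicator)
    qed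
  qed
  also have "\<dots> = (\<integral>\<^sup>+ y. indicator {0..<h} y \<partial>lborel) + (\<integral>\<^sup>+ y. G y \<partial>lborel)"
    by (intro nn_integral_add) auto
  also have "(\<integral>\<^sup>+ y. G y \<partial>lborel) = ennreal \<bar>\<alpha>\<bar> * (\<integral>\<^sup>+ v. G (h + \<alpha> * v) \<partial>lborel)"
    using assms(1) by (intro nn_integral_real_affine) auto
  also have "(\<lambda>v. G (h + \<alpha> * v)) = (\<lambda>v. ennreal (\<psi> v) * indicator {0..} v)"
    using assms(1) by (auto simp: G_def)
  finally show ?thesis using assms(1,2) by simp
qed

lemma borel_measurable_antimono: "antimono f \<Longrightarrow> f \<in> borel_measurable (borel :: real measure)"
  for f :: "real \<Rightarrow> real"
proof -
  assume "antimono f"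
  then have "mono (\<lambda>x. - f x)" by (auto simp: mono_def antimono_def)
  then have "(\<lambda>x. - (- f x)) \<in> borel_measurable borel" by (intro borel_measurable_uminus borel_measurable_mono)
  then show ?thesis by simp
qed

lemma ennreal_less_minus_iff:
  assumes "v \<noteq> top" "0 \<le> a" "0 \<le> y"
  shows "ennreal y < v - ennreal a \<longleftrightarrow> y < enn2real v - a"
proof -
  obtain r where "0 \<le> r" "v = ennreal r" using assms(1) by (cases v) auto
  then show ?thesis using assms(2,3) by (simp add: ennreal_minus ennreal_less_iff)
qed

lemma ennreal_less_iff_less_enn2real: "v \<noteq> top \<Longrightarrow> 0 \<le> y \<Longrightarrow> ennreal y < v \<longleftrightarrow> y < enn2real v"
  using ennreal_less_minus_iff[of v 0 y] by simp

lemma ennreal_le_of_mult_le: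
  fixes x y :: ennreal
  assumes "\<And>a. 0 < a \<Longrightarrow> a < 1 \<Longrightarrow> ennreal a * x \<le> y"
  shows "x \<le> y"
proof (cases x)
  case (real r)
  show ?thesis
  proof (cases y)
    case (real q)
    have "r \<le> q"
    proof (rule field_le_mult_one_interval)
      fix a :: real assume "0 < a" "a < 1"
      then show "a * r \<le> q" using assms[of a] real \<open>x = ennreal r\<close> \<open>0 \<le> r\<close>
        by (simp add: ennreal_mult[symmetric])
    qed
    then show ?thesis using real \<open>x = ennreal r\<close> by (simp add: ennreal_leI)
  qed simp
next
  case top
  then show ?thesis using assms[of "1/2"] by (simp add: ennreal_mult_top)
qed

lemma tendsto_jump_sum_at_left:
  fixes t c :: "nat \<Rightarrow> real"
  assumes "\<And>i. 0 \<le> c i" "summable (\<lambda>i. if t i < x then c i else 0)"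
  shows "((\<lambda>u. \<Sum>i. if t i < u then c i else 0) \<longlongrightarrow> (\<Sum>i. if t i < x then c i else 0)) (at_left x)"
proof -
  have "((\<lambda>u. if t i < u then c i else 0) \<longlongrightarrow> (if t i < x then c i else 0)) (at_left x)" for i
  proof (cases "t i < x")
    case True
    then have "eventually (\<lambda>u. t i < u) (at_left x)"
      by (intro eventually_at_leftI[of "t i"]) auto
    then show ?thesis using True by (simp add: tendsto_eventually eventually_mono)
  next
    case False
    then have "eventually (\<lambda>u. \<not> t i < u) (at_left x)"
      by (auto simp: eventually_at_filter)
    then show ?thesis using False by (simp add: tendsto_eventually eventually_mono)
  qed
  moreover have "eventually (\<lambda>(i, u). norm (if t i < u then c i else 0) \<le> (if t i < x then c i else 0))
      (at_top \<times>\<^sub>F at_left x)"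
    unfolding eventually_prod_filter
    by (intro exI[of _ "\<lambda>_. True"] exI[of _ "\<lambda>u. u < x"]) (auto simp: eventually_at_filter assms(1))
  ultimately show ?thesis
    using tannerys_theorem[where a = "\<lambda>i u. if t i < u then c i else 0" and F = "at_left x"
        and b = "\<lambda>i. if t i < x then c i else 0" and M = "\<lambda>i. if t i < x then c i else 0"]
      assms(2) by simp
qed

lemma cum_payE:
  assumes "cum_pay T"
  obtains f :: "real \<Rightarrow> real" and t c :: "nat \<Rightarrow> real"
  where "\<And>s. 0 \<le> f s" "set_integrable lborel {0..} f" "\<And>i. 0 \<le> t i" "\<And>i. 0 \<le> c i"
    "\<And>x. 0 \<le> x \<Longrightarrow> summable (\<lambda>i. if t i < x then c i else 0)"
    "\<And>x. 0 \<le> x \<Longrightarrow> T x = (LBINT s:{0..x}. f s) + (\<Sum>i. if t i < x then c i else 0)"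
  using assms unfolding cum_pay_def by blast

lemma cum_pay_mono:
  assumes "cum_pay T" "0 \<le> x" "x \<le> y"
  shows "T x \<le> T y"
proof -
  obtain f t c where f: "\<And>s. 0 \<le> f s" "set_integrable lborel {0..} f"
    and "\<And>i. 0 \<le> t i" and c: "\<And>i. 0 \<le> c i" and J: "\<And>x. 0 \<le> x \<Longrightarrow> summable (\<lambda>i. if t i < x then c i else 0)"
    and T: "\<And>x. 0 \<le> x \<Longrightarrow> T x = (LBINT s:{0..x}. f s) + (\<Sum>i. if t i < x then c i else 0)"
    using assms(1) by (rule cum_payE) blast
  have "(LBINT s:{0..x}. f s) \<le> (LBINT s:{0..y}. f s)"
    using f assms(3) by (rule set_integral_Icc_mono_nonneg)
  moreover have "(\<Sum>i. if t i < x then c i else 0) \<le> (\<Sum>i. if t i < y then c i else 0)"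
    using J assms c by (intro suminf_le) auto
  ultimately show ?thesis using T assms by simp
qed

lemma cum_pay_zero: "cum_pay T \<Longrightarrow> T 0 = 0"
proof (erule cum_payE)
  fix f t c assume "\<And>i. 0 \<le> (t i :: real)"
    and T: "\<And>x. 0 \<le> x \<Longrightarrow> T x = (LBINT s:{0..x}. f s) + (\<Sum>i. if t i < x then c i else 0)"
  then have "\<not> t i < 0" for i by (simp add: not_less)
  then show "T 0 = 0" using T by (simp add: set_integral_singleton)
qed

lemma cum_pay_nonneg: "cum_pay T \<Longrightarrow> 0 \<le> x \<Longrightarrow> 0 \<le> T x"
  using cum_pay_mono[of T 0 x] cum_pay_zero[of T] by simp

lemma cum_pay_tendsto_at_left:
  assumes "cum_pay T" "0 < x"
  shows "(T \<longlongrightarrow> T x) (at_left x)"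
proof -
  obtain f t c where f: "\<And>s. 0 \<le> f s" "set_integrable lborel {0..} f"
    and "\<And>i. 0 \<le> t i" and c: "\<And>i. 0 \<le> c i" and J: "\<And>x. 0 \<le> x \<Longrightarrow> summable (\<lambda>i. if t i < x then c i else 0)"
    and T: "\<And>x. 0 \<le> x \<Longrightarrow> T x = (LBINT s:{0..x}. f s) + (\<Sum>i. if t i < x then c i else 0)"
    using assms(1) by (rule cum_payE) blast
  have int_on: "set_integrable lborel A f" if "A \<subseteq> {0..}" "A \<in> sets lborel" for A
    using set_integrable_subset[OF f(2) that(2,1)] .
  have meas_on: "set_borel_measurable lborel A f" if "A \<subseteq> {0..}" "A \<in> sets lborel" for A
    using int_on[OF that] unfolding set_integrable_def set_borel_measurable_def
    by (rule borel_measurable_integrable)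
  have "((\<lambda>u. LBINT s:{0..u}. f s) \<longlongrightarrow> (LBINT s:{0..<x}. f s)) (at_left x)"
    using assms(2) by (intro tendsto_set_lebesgue_integral_at_left int_on) auto
  also have "(LBINT s:{0..<x}. f s) = (LBINT s:{0..x}. f s)"
    by (rule set_integral_cong_set)
      (use AE_lborel_singleton[of x] in \<open>auto intro!: meas_on\<close>)
  finally have "((\<lambda>u. (LBINT s:{0..u}. f s) + (\<Sum>i. if t i < u then c i else 0)) \<longlongrightarrow> T x) (at_left x)"
    unfolding T[OF less_imp_le[OF assms(2)]]
    by (rule tendsto_add[OF _ tendsto_jump_sum_at_left[OF c J]]) (use assms(2) in simp)
  moreover have "eventually (\<lambda>u. (LBINT s:{0..u}. f s) + (\<Sum>i. if t i < u then c i else 0) = T u) (at_left x)"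
    using eventually_at_leftI[OF _ assms(2)] T by (simp add: eventually_mono)
  ultimately show ?thesis by (rule Lim_transform_eventually)
qed

lemma cum_pay_last_le:
  assumes "cum_pay T" "0 \<le> s" "0 \<le> r" "s < T r"
  obtains t where "0 \<le> t" "T t \<le> s" "\<And>r. t < r \<Longrightarrow> s < T r"
proof -
  define S where "S = {t. 0 \<le> t \<and> T t \<le> s}"
  have "0 \<in> S" using cum_pay_zero[OF assms(1)] assms(2) by (simp add: S_def)
  then have ne: "S \<noteq> {}" by blast
  have bdd: "bdd_above S"
  proof (rule bdd_aboveI)
    fix u assume "u \<in> S"
    show "u \<le> r"
    proof (rule ccontr)
      assume "\<not> u \<le> r"
      then have "T r \<le> T u" by (intro cum_pay_mono[OF assms(1) assms(3)]) simp
      then show False using \<open>u \<in> S\<close> assms(4) by (simp add: S_def)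
    qed
  qed
  have t0: "0 \<le> Sup S" using \<open>0 \<in> S\<close> bdd by (rule cSup_upper)
  have below: "\<exists>v\<in>S. u < v" if "u < Sup S" for u using that less_cSup_iff[OF ne bdd] by blast
  have above: "r \<le> Sup S" if "r \<in> S" for r using that bdd by (rule cSup_upper)
  have le: "T (Sup S) \<le> s"
  proof (cases "Sup S = 0")
    case False
    then have pos: "0 < Sup S" using t0 by simp
    have "eventually (\<lambda>u. T u \<le> s) (at_left (Sup S))"
    proof (rule eventually_at_leftI[OF _ pos])
      fix u assume "u \<in> {0<..<Sup S}"
      with below obtain v where "v \<in> S" "u < v" by auto
      then show "T u \<le> s" using cum_pay_mono[OF assms(1), of u v] \<open>u \<in> {0<..<Sup S}\<close> by (auto simp: S_def)
    qed
    then show ?thesis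
      by (rule tendsto_upperbound[OF cum_pay_tendsto_at_left[OF assms(1) pos]]) simp
  qed (use cum_pay_zero[OF assms(1)] assms(2) in simp)
  have gt: "s < T r" if "Sup S < r" for r
  proof (rule ccontr)
    assume "\<not> s < T r"
    then have "r \<in> S" using that t0 by (simp add: S_def)
    then show False using above that by fastforce
  qed
  show ?thesis by (rule that[OF t0 le gt])
qed

lemma Tbar_ereal [simp]: "Tbar T (ereal r) = ennreal (T r)"
  by (simp add: Tbar_def)

lemma Tbar_less_top: "x \<noteq> \<infinity> \<Longrightarrow> Tbar T x < top"
  by (simp add: Tbar_def)

lemma cum_pay_le_Tbar:
  assumes "cum_pay T" "0 \<le> t" "ereal t \<le> x"
  shows "ennreal (T t) \<le> Tbar T x"
proof (cases x)
  case (real r)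
  then show ?thesis using assms cum_pay_mono[OF assms(1), of t r] by (simp add: ennreal_leI)
next
  case PInf
  then show ?thesis using assms by (auto simp: Tbar_def intro!: SUP_upper)
qed (use assms in simp)

lemma Tbar_le_cum_pay:
  assumes "cum_pay T" "0 \<le> x" "x \<le> ereal t"
  shows "Tbar T x \<le> ennreal (T t)"
  using assms cum_pay_mono[OF assms(1)] by (cases x) (auto intro: ennreal_leI)

lemma Tbar_le_bound:
  assumes "cum_pay T" "0 \<le> x" "\<And>r. 0 \<le> r \<Longrightarrow> T r \<le> s"
  shows "Tbar T x \<le> ennreal s"
  using assms by (cases x) (auto simp: Tbar_def intro!: SUP_least ennreal_leI)

lemma cum_pay_exceeds_of_Tbar_exceeds:
  assumes "cum_pay T" "0 \<le> x" "0 \<le> s" "s < enn2real (Tbar T x)"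
  obtains r where "0 \<le> r" "s < T r"
proof (rule ccontr)
  assume "\<not> thesis"
  then have "Tbar T x \<le> ennreal s"
    using that by (intro Tbar_le_bound[OF assms(1,2)]) (meson not_le)
  then show False using assms(4) enn2real_leI[OF assms(3)] by (simp add: not_le[symmetric])
qed

lemma Tbar_gt_imp_gt:
  assumes "cum_pay T" "0 \<le> x" "T t \<le> s" "s < enn2real (Tbar T x)"
  shows "ereal t < x"
proof (rule ccontr)
  assume "\<not> ereal t < x"
  then have "x \<le> ereal t" by simp
  then have "0 \<le> t" using assms(2) by (cases x) auto
  then have "0 \<le> s" using cum_pay_nonneg[OF assms(1)] assms(3) by (meson order_trans)
  have "Tbar T x \<le> ennreal s"
    using Tbar_le_cum_pay[OF assms(1,2) \<open>x \<le> ereal t\<close>] assms(3) by (auto intro: order_trans ennreal_leI)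
  then have "enn2real (Tbar T x) \<le> s" by (rule enn2real_leI[OF \<open>0 \<le> s\<close>])
  then show False using assms(4) by simp
qed

lemma gt_imp_Tbar_gt:
  assumes "cum_pay T" "0 \<le> t" "\<And>r. t < r \<Longrightarrow> s < T r" "ereal t < x" "Tbar T x \<noteq> top"
  shows "s < enn2real (Tbar T x)"
proof -
  obtain r where r: "t < r" "ereal r \<le> x"
  proof (cases x)
    case PInf
    then show ?thesis using that[of "t + 1"] by simp
  qed (use that assms(4) in auto)
  then have "ennreal (T r) \<le> Tbar T x" using assms(2) by (intro cum_pay_le_Tbar[OF assms(1)]) auto
  then have "enn2real (ennreal (T r)) \<le> enn2real (Tbar T x)"
    by (rule enn2real_mono) (use assms(5) in \<open>simp add: top.not_eq_extremum\<close>)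
  then have "T r \<le> enn2real (Tbar T x)" using cum_pay_nonneg[OF assms(1), of r] r(1) assms(2) by simp
  then show ?thesis using assms(3)[OF r(1)] by simp
qed

lemma measurable_Tbar:
  assumes "cum_pay T" and [measurable]: "\<tau> \<in> borel_measurable M"
    and "\<And>\<omega>. \<omega> \<in> space M \<Longrightarrow> 0 \<le> \<tau> \<omega>"
  shows "(\<lambda>\<omega>. Tbar T (\<tau> \<omega>)) \<in> borel_measurable M"
proof -
  have "mono (\<lambda>x. T (max 0 x))" using cum_pay_mono[OF assms(1)] by (auto simp: mono_def)
  then have [measurable]: "(\<lambda>x. T (max 0 x)) \<in> borel_measurable borel" by (rule borel_measurable_mono)
  have "(\<lambda>\<omega>. if \<tau> \<omega> = \<infinity> then Tbar T \<infinity> else ennreal (T (max 0 (real_of_ereal (\<tau> \<omega>)))))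
      \<in> borel_measurable M"
    by measurable
  moreover have "Tbar T (\<tau> \<omega>) = (if \<tau> \<omega> = \<infinity> then Tbar T \<infinity> else ennreal (T (max 0 (real_of_ereal (\<tau> \<omega>)))))"
    if "\<omega> \<in> space M" for \<omega>
    using assms(3)[OF that] by (cases "\<tau> \<omega>") auto
  ultimately show ?thesis by (simp cong: measurable_cong)
qed

lemma dppD:
  assumes "dpp M \<tau> T"
  shows "cum_pay T" "\<tau> \<in> borel_measurable M" "\<And>\<omega>. \<omega> \<in> space M \<Longrightarrow> 0 \<le> \<tau> \<omega>"
    "(\<lambda>\<omega>. Tbar T (\<tau> \<omega>)) \<in> borel_measurable M"
  using assms measurable_Tbar by (auto simp: dpp_def stopping_time_rv_def)

lemma weighting_zero: "weighting w \<Longrightarrow> w 0 = 0"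
  and weighting_one: "weighting w \<Longrightarrow> w 1 = 1"
  and weighting_le_one: "weighting w \<Longrightarrow> 0 \<le> x \<Longrightarrow> x \<le> 1 \<Longrightarrow> w x \<le> 1"
  by (auto simp: weighting_def)

lemma weighting_mono:
  assumes "weighting w" "0 \<le> x" "x \<le> y" "y \<le> 1"
  shows "w x \<le> w y"
  using assms strict_mono_onD[of "{0..1}" w x y] by (cases "x = y") (auto simp: weighting_def)

lemma weighting_pos:
  assumes "weighting w" "0 < x" "x \<le> 1"
  shows "0 < w x"
  using assms strict_mono_onD[of "{0..1}" w 0 x] by (auto simp: weighting_def)

lemma nn_integral_weighting_mono:
  fixes p q :: "real \<Rightarrow> real"
  assumes "weighting w" "\<And>y. 0 \<le> y \<Longrightarrow> 0 \<le> p y" "\<And>y. 0 \<le> y \<Longrightarrow> p y \<le> q y"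
    "\<And>y. 0 \<le> y \<Longrightarrow> q y \<le> 1"
  shows "(\<integral>\<^sup>+ y\<in>{0..}. ennreal (w (p y)) \<partial>lborel) \<le> (\<integral>\<^sup>+ y\<in>{0..}. ennreal (w (q y)) \<partial>lborel)"
  using assms weighting_mono[OF assms(1)]
  by (intro nn_integral_mono) (auto intro!: ennreal_leI split: split_indicator)

lemma nn_integral_weighting_top:
  fixes p :: "real \<Rightarrow> real"
  assumes "weighting w" "0 < c" "\<And>y. 0 \<le> y \<Longrightarrow> c \<le> p y" "\<And>y. 0 \<le> y \<Longrightarrow> p y \<le> 1"
  shows "(\<integral>\<^sup>+ y\<in>{0..}. ennreal (w (p y)) \<partial>lborel) = top"
proof -
  have "c \<le> 1" using assms(3,4)[of 0] by simp
  have "(\<integral>\<^sup>+ y\<in>{0::real..}. ennreal (w c) \<partial>lborel) = top"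
    using weighting_pos[OF assms(1,2) \<open>c \<le> 1\<close>]
    by (simp add: nn_integral_cmult_indicator emeasure_lborel_Ici ennreal_mult_top)
  moreover have "(\<integral>\<^sup>+ y\<in>{0::real..}. ennreal (w c) \<partial>lborel) \<le> (\<integral>\<^sup>+ y\<in>{0..}. ennreal (w (p y)) \<partial>lborel)"
    using assms(2-4) by (intro nn_integral_weighting_mono[OF assms(1)]) auto
  ultimately show ?thesis by (simp add: top_unique)
qed

section \<open>Rounding to a lattice\<close>

definition round_up :: "real \<Rightarrow> real \<Rightarrow> real" where
  "round_up h x = h * of_int \<lceil>x / h\<rceil>"

definition round_down :: "real \<Rightarrow> real \<Rightarrow> real" where
  "round_down h x = h * of_int \<lfloor>x / h\<rfloor>"

lemma le_round_up:
  assumes "0 < h" shows "x \<le> round_up h x"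
proof -
  have "x / h \<le> of_int \<lceil>x / h\<rceil>" by simp
  then have "x \<le> of_int \<lceil>x / h\<rceil> * h" by (simp only: pos_divide_le_eq[OF assms])
  then show ?thesis by (simp add: round_up_def mult.commute)
qed

lemma round_down_le:
  assumes "0 < h" shows "round_down h x \<le> x"
proof -
  have "of_int \<lfloor>x / h\<rfloor> \<le> x / h" by simp
  then have "of_int \<lfloor>x / h\<rfloor> * h \<le> x" by (simp only: pos_le_divide_eq[OF assms])
  then show ?thesis by (simp add: round_down_def mult.commute)
qed

lemma round_down_gt:
  assumes "0 < h" shows "x - h < round_down h x"
proof -
  have "x / h - 1 < of_int \<lfloor>x / h\<rfloor>" by linarith
  then show ?thesis using assms unfolding round_down_def by (simp add: field_simps)
qed

lemma round_down_nonneg: "0 < h \<Longrightarrow> 0 \<le> x \<Longrightarrow> 0 \<le> round_down h x"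
  unfolding round_down_def by simp

lemma round_down_add_ge: "0 < h \<Longrightarrow> round_down h s + (y - h) \<le> round_down h (s + y)"
  using round_down_le[of h s] round_down_gt[of h "s + y"] by simp

lemma less_round_up_iff:
  assumes "0 < h" shows "s < round_up h a \<longleftrightarrow> round_down h s < a"
proof -
  have "s < round_up h a \<longleftrightarrow> s / h < of_int \<lceil>a / h\<rceil>"
    using assms by (simp add: round_up_def pos_divide_less_eq mult.commute)
  also have "\<dots> \<longleftrightarrow> \<lfloor>s / h\<rfloor> < \<lceil>a / h\<rceil>" by (simp add: floor_less_iff)
  also have "\<dots> \<longleftrightarrow> of_int \<lfloor>s / h\<rfloor> < a / h" by (simp add: less_ceiling_iff)
  also have "\<dots> \<longleftrightarrow> round_down h s < a"
    using assms by (simp add: round_down_def pos_less_divide_eq mult.commute)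
  finally show ?thesis .
qed

lemma round_up_gt_iff:
  assumes "0 < h" "0 < \<alpha>"
  shows "x < round_up h (\<alpha> * y) \<longleftrightarrow> round_down h x / \<alpha> < y"
  using assms by (simp add: less_round_up_iff pos_divide_less_eq mult.commute)

lemma round_up_in_lattice:
  assumes "0 < h" "0 \<le> x"
  shows "round_up h x \<in> range (\<lambda>n. h * real n)"
proof -
  have "0 \<le> x / h" using assms by simp
  then have "0 \<le> \<lceil>x / h\<rceil>" by linarith
  then have "round_up h x = h * real (nat \<lceil>x / h\<rceil>)" by (simp add: round_up_def)
  then show ?thesis by blast
qed

section \<open>The auxiliary stopping money problem\<close>

definition aux_constraint :: "'a measure \<Rightarrow> real \<Rightarrow> real \<Rightarrow> (real \<Rightarrow> real) \<Rightarrow> ('a \<Rightarrow> real) \<Rightarrow> bool" where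
  "aux_constraint M \<theta> lam wm X \<longleftrightarrow>
     (\<forall>s\<ge>0. measure M {\<omega>\<in>space M. X \<omega> > s} > 0 \<longrightarrow>
        ennreal lam * (\<integral>\<^sup>+ y\<in>{0..}. ennreal (wm (cond_prob M
             {\<omega>\<in>space M. X \<omega> - s > y} {\<omega>\<in>space M. X \<omega> > s})) \<partial>lborel) \<le> ennreal \<theta>)"

lemma aux_feasible_iff: "aux_feasible M \<theta> lam wm X \<longleftrightarrow> in_calT M X \<and> aux_constraint M \<theta> lam wm X"
  by (simp add: aux_feasible_def aux_constraint_def)

lemma cdf_decomp_of_jump_fun: "mono J \<Longrightarrow> (\<And>t. 0 \<le> J t) \<Longrightarrow> jump_fun J \<Longrightarrow> cdf_decomp J"
  unfolding cdf_decomp_def abs_cont_fun_def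
  by (intro exI[of _ "\<lambda>_. 0"] exI[of _ J]) (auto simp: mono_def intro: exI[of _ 1])

context prob_space
begin

lemma cond_prob_nonneg: "0 \<le> cond_prob M A B"
  by (simp add: cond_prob_def)

lemma cond_prob_le_one: "cond_prob M A B \<le> 1"
proof (cases "A \<inter> B \<in> events \<and> B \<in> events")
  case True
  then have "prob (A \<inter> B) \<le> prob B" by (intro finite_measure_mono) auto
  then show ?thesis by (auto simp: cond_prob_def divide_le_eq_1 less_le)
qed (auto simp: cond_prob_def measure_notin_sets)

lemma cond_prob_le:
  assumes "prob (A \<inter> B) \<le> prob (A' \<inter> B')" "prob B' \<le> prob B" "0 < prob B'"
  shows "cond_prob M A B \<le> cond_prob M A' B'"
proof -
  have "prob (A \<inter> B) / prob B \<le> prob (A' \<inter> B') / prob B"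
    using assms by (intro divide_right_mono) auto
  also have "\<dots> \<le> prob (A' \<inter> B') / prob B'"
    using assms by (intro divide_left_mono) auto
  finally show ?thesis by (simp add: cond_prob_def)
qed

lemma cond_prob_excess:
  fixes X :: "'a \<Rightarrow> real"
  assumes "0 \<le> y"
  shows "cond_prob M {\<omega>\<in>space M. X \<omega> - s > y} {\<omega>\<in>space M. X \<omega> > s}
    = prob {\<omega>\<in>space M. X \<omega> > s + y} / prob {\<omega>\<in>space M. X \<omega> > s}"
proof -
  have "{\<omega>\<in>space M. X \<omega> - s > y} \<inter> {\<omega>\<in>space M. X \<omega> > s} = {\<omega>\<in>space M. X \<omega> > s + y}"
    using assms by auto
  then show ?thesis unfolding cond_prob_def by (simp only:)
qed

lemma nn_integral_weighting_cond_prob_null: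
  "weighting w \<Longrightarrow> prob B = 0 \<Longrightarrow> (\<integral>\<^sup>+ y\<in>{0..}. ennreal (w (cond_prob M (A y) B)) \<partial>lborel) = 0"
  by (simp add: cond_prob_def weighting_zero)

lemma antimono_prob_gt: "antimono (\<lambda>y. prob {\<omega>\<in>space M. X \<omega> > y})"
  if "X \<in> borel_measurable M" for X :: "'a \<Rightarrow> real"
  using that by (auto simp: antimono_def intro!: finite_measure_mono)

lemma prob_gt_ratio_le_one:
  fixes Y :: "'a \<Rightarrow> real"
  assumes "Y \<in> borel_measurable M" "\<sigma> \<le> x"
  shows "prob {\<omega>\<in>space M. Y \<omega> > x} / prob {\<omega>\<in>space M. Y \<omega> > \<sigma>} \<le> 1"
proof -
  have "prob {\<omega>\<in>space M. Y \<omega> > x} \<le> prob {\<omega>\<in>space M. Y \<omega> > \<sigma>}"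
    using antimono_prob_gt[OF assms(1)] assms(2) by (auto simp: antimono_def)
  then show ?thesis by (auto simp: divide_le_eq_1 less_le)
qed

text \<open>The cut-off \<open>max 0 v\<close> keeps the argument of \<open>w\<close> in [0, 1], where \<open>w\<close> is monotone.\<close>

lemma borel_measurable_weighted_tail:
  fixes Y :: "'a \<Rightarrow> real"
  assumes "weighting w" "Y \<in> borel_measurable M"
  shows "(\<lambda>v. w (prob {\<omega>\<in>space M. Y \<omega> > \<sigma> + max 0 v} / prob {\<omega>\<in>space M. Y \<omega> > \<sigma>}))
    \<in> borel_measurable borel"
proof (intro borel_measurable_antimono antimonoI)
  fix u v :: real assume "u \<le> v"
  then have "prob {\<omega>\<in>space M. Y \<omega> > \<sigma> + max 0 v} / prob {\<omega>\<in>space M. Y \<omega> > \<sigma>}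
      \<le> prob {\<omega>\<in>space M. Y \<omega> > \<sigma> + max 0 u} / prob {\<omega>\<in>space M. Y \<omega> > \<sigma>}"
    using antimono_prob_gt[OF assms(2)] by (auto simp: antimono_def intro!: divide_right_mono)
  then show "w (prob {\<omega>\<in>space M. Y \<omega> > \<sigma> + max 0 v} / prob {\<omega>\<in>space M. Y \<omega> > \<sigma>})
      \<le> w (prob {\<omega>\<in>space M. Y \<omega> > \<sigma> + max 0 u} / prob {\<omega>\<in>space M. Y \<omega> > \<sigma>})"
    using prob_gt_ratio_le_one[OF assms(2)] by (intro weighting_mono[OF assms(1)]) auto
qed

lemma in_calT_discrete:
  fixes X :: "'a \<Rightarrow> real" and x :: "nat \<Rightarrow> real"
  assumes [measurable]: "X \<in> borel_measurable M" and "\<And>\<omega>. \<omega> \<in> space M \<Longrightarrow> 0 \<le> X \<omega>"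
    and "inj x" and "\<And>\<omega>. \<omega> \<in> space M \<Longrightarrow> X \<omega> \<in> range x"
  shows "in_calT M X"
proof -
  define F where "F t = prob {\<omega>\<in>space M. X \<omega> \<le> t}" for t
  define p where "p n = prob {\<omega>\<in>space M. X \<omega> = x n}" for n
  have disj: "disjoint_family (\<lambda>n. {\<omega>\<in>space M. X \<omega> = x n})"
    using \<open>inj x\<close> by (auto simp: disjoint_family_on_def inj_eq)
  have sums: "(\<lambda>n. p n * (if t < x n then 0 else 1)) sums F t" for t
  proof -
    have "(\<lambda>n. prob {\<omega>\<in>space M. X \<omega> = x n \<and> x n \<le> t}) sums prob (\<Union>n. {\<omega>\<in>space M. X \<omega> = x n \<and> x n \<le> t})"
      using disj by (intro finite_measure_UNION) (auto simp: disjoint_family_on_def)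
    moreover have "(\<Union>n. {\<omega>\<in>space M. X \<omega> = x n \<and> x n \<le> t}) = {\<omega>\<in>space M. X \<omega> \<le> t}"
      using assms(4) by fastforce
    moreover have "prob {\<omega>\<in>space M. X \<omega> = x n \<and> x n \<le> t} = p n * (if t < x n then 0 else 1)" for n
      by (simp add: p_def)
    ultimately show ?thesis by (simp add: F_def)
  qed
  have "summable p"
    unfolding p_def using disj by (intro sums_summable[OF finite_measure_UNION]) auto
  have "jump_fun F"
    unfolding jump_fun_def
    by (rule exI[of _ x], rule exI[of _ p], rule exI[of _ "\<lambda>_. 1"])
      (use sums_unique[OF sums] \<open>summable p\<close> in \<open>auto simp: p_def cong: if_cong\<close>)
  moreover have "mono F" unfolding F_def mono_def by (auto intro!: finite_measure_mono)
  ultimately have "cdf_decomp F" by (intro cdf_decomp_of_jump_fun) (auto simp: F_def)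
  then show ?thesis using assms(2) by (simp add: in_calT_def F_def[abs_def])
qed

lemma aux_value_mono:
  assumes "Y \<in> borel_measurable M" "\<And>\<omega>. \<omega> \<in> space M \<Longrightarrow> X \<omega> \<le> Y \<omega>"
  shows "aux_value M X \<le> aux_value M Y"
proof -
  have "{\<omega>\<in>space M. X \<omega> > y} \<subseteq> {\<omega>\<in>space M. Y \<omega> > y}" for y
    by (auto intro: less_le_trans[OF _ assms(2)])
  then show ?thesis unfolding aux_value_def using assms(1)
    by (intro nn_integral_mono) (auto intro!: ennreal_leI finite_measure_mono split: split_indicator)
qed

lemma aux_value_scale:
  assumes [measurable]: "X \<in> borel_measurable M" and "0 < \<alpha>"
  shows "aux_value M (\<lambda>\<omega>. \<alpha> * X \<omega>) = ennreal \<alpha> * aux_value M X"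
proof -
  define f where "f y = ennreal (prob {\<omega>\<in>space M. \<alpha> * X \<omega> > y}) * indicator {0..} y" for y :: real
  have "(\<lambda>y. prob {\<omega>\<in>space M. \<alpha> * X \<omega> > y}) \<in> borel_measurable borel"
    by (intro borel_measurable_antimono antimono_prob_gt) measurable
  then have [measurable]: "f \<in> borel_measurable borel" unfolding f_def by measurable
  have "aux_value M (\<lambda>\<omega>. \<alpha> * X \<omega>) = (\<integral>\<^sup>+ y. f y \<partial>lborel)"
    by (simp add: aux_value_def f_def)
  also have "\<dots> = ennreal \<bar>\<alpha>\<bar> * (\<integral>\<^sup>+ y. f (0 + \<alpha> * y) \<partial>lborel)"
    using assms(2) by (intro nn_integral_real_affine) auto
  also have "(\<integral>\<^sup>+ y. f (0 + \<alpha> * y) \<partial>lborel) = aux_value M X"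
    unfolding aux_value_def f_def using assms(2)
    by (intro nn_integral_cong) (auto simp: zero_le_mult_iff split: split_indicator)
  finally show ?thesis using assms(2) by simp
qed

text \<open>Rounding \<open>\<alpha> * Y\<close> up to a multiple of \<open>h\<close> delays the conditional excess tail by at
  most \<open>h\<close> and stretches it by the factor \<open>\<alpha>\<close>.\<close>

lemma nn_integral_excess_round_up:
  fixes Y :: "'a \<Rightarrow> real" and s :: real
  assumes "weighting wm" and [measurable]: "Y \<in> borel_measurable M" and "0 < \<alpha>" "0 < h"
  defines "\<sigma> \<equiv> round_down h s / \<alpha>"
  shows "(\<integral>\<^sup>+ y\<in>{0..}. ennreal (wm (cond_prob M {\<omega>\<in>space M. round_up h (\<alpha> * Y \<omega>) - s > y}
      {\<omega>\<in>space M. round_up h (\<alpha> * Y \<omega>) > s})) \<partial>lborel)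
    \<le> ennreal h + ennreal \<alpha> * (\<integral>\<^sup>+ v\<in>{0..}. ennreal (wm (cond_prob M
      {\<omega>\<in>space M. Y \<omega> - \<sigma> > v} {\<omega>\<in>space M. Y \<omega> > \<sigma>})) \<partial>lborel)"
    (is "?I \<le> _ + _ * ?J")
proof -
  define P where "P = prob {\<omega>\<in>space M. Y \<omega> > \<sigma>}"
  define \<psi> where "\<psi> v = wm (prob {\<omega>\<in>space M. Y \<omega> > \<sigma> + max 0 v} / P)" for v
  have Z_gt: "{\<omega>\<in>space M. round_up h (\<alpha> * Y \<omega>) > x} = {\<omega>\<in>space M. Y \<omega> > round_down h x / \<alpha>}" for x
    using round_up_gt_iff[OF assms(4,3)] by auto
  have "?I \<le> ennreal h + ennreal \<alpha> * (\<integral>\<^sup>+ v\<in>{0..}. ennreal (\<psi> v) \<partial>lborel)"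
  proof (rule nn_integral_Ici_le_shift_scale[OF assms(3) less_imp_le[OF assms(4)]])
    show "\<psi> \<in> borel_measurable borel"
      unfolding \<psi>_def P_def by (rule borel_measurable_weighted_tail[OF assms(1,2)])
    fix y
    let ?q = "cond_prob M {\<omega>\<in>space M. round_up h (\<alpha> * Y \<omega>) - s > y} {\<omega>\<in>space M. round_up h (\<alpha> * Y \<omega>) > s}"
    show "wm ?q \<le> 1" by (intro weighting_le_one[OF assms(1)] cond_prob_nonneg cond_prob_le_one)
    assume "h \<le> y"
    then have "?q = prob {\<omega>\<in>space M. round_up h (\<alpha> * Y \<omega>) > s + y}
        / prob {\<omega>\<in>space M. round_up h (\<alpha> * Y \<omega>) > s}"
      using assms(4) by (intro cond_prob_excess) simp
    then have "?q = prob {\<omega>\<in>space M. Y \<omega> > round_down h (s + y) / \<alpha>} / P"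
      by (simp only: Z_gt P_def \<sigma>_def)
    moreover have "\<sigma> + max 0 ((y - h) / \<alpha>) \<le> round_down h (s + y) / \<alpha>"
      using round_down_add_ge[OF assms(4), of s y] \<open>h \<le> y\<close> assms(3)
      by (simp add: \<sigma>_def divide_right_mono add_divide_distrib[symmetric])
    ultimately show "wm ?q \<le> \<psi> ((y - h) / \<alpha>)"
      unfolding \<psi>_def P_def using antimono_prob_gt[OF assms(2)]
      by (intro weighting_mono[OF assms(1)] prob_gt_ratio_le_one[OF assms(2)])
        (auto simp: antimono_def intro!: divide_right_mono)
  qed
  also have "(\<integral>\<^sup>+ v\<in>{0..}. ennreal (\<psi> v) \<partial>lborel) = ?J"
    by (intro nn_integral_cong) (auto simp: \<psi>_def P_def cond_prob_excess split: split_indicator)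
  finally show ?thesis .
qed

lemma aux_constraint_round_up:
  fixes Y :: "'a \<Rightarrow> real"
  assumes "0 \<le> lam" "0 \<le> \<theta>" "weighting wm" and [measurable]: "Y \<in> borel_measurable M"
    and "aux_constraint M \<theta> lam wm Y" "0 < \<alpha>" "0 < h" "lam * h + \<alpha> * \<theta> \<le> \<theta>"
  shows "aux_constraint M \<theta> lam wm (\<lambda>\<omega>. round_up h (\<alpha> * Y \<omega>))"
  unfolding aux_constraint_def
proof (intro allI impI)
  fix s :: real assume "0 \<le> s" and pos: "0 < prob {\<omega>\<in>space M. round_up h (\<alpha> * Y \<omega>) > s}"
  define \<sigma> where "\<sigma> = round_down h s / \<alpha>"
  let ?J = "\<integral>\<^sup>+ v\<in>{0..}. ennreal (wm (cond_prob M {\<omega>\<in>space M. Y \<omega> - \<sigma> > v} {\<omega>\<in>space M. Y \<omega> > \<sigma>})) \<partial>lborel"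
  have "0 \<le> \<sigma>" using round_down_nonneg[OF assms(7) \<open>0 \<le> s\<close>] assms(6) by (simp add: \<sigma>_def)
  moreover have "0 < prob {\<omega>\<in>space M. Y \<omega> > \<sigma>}"
    using pos round_up_gt_iff[OF assms(7,6)] by (simp add: \<sigma>_def)
  ultimately have J: "ennreal lam * ?J \<le> ennreal \<theta>" using assms(5) by (simp add: aux_constraint_def)
  have "ennreal lam * (\<integral>\<^sup>+ y\<in>{0..}. ennreal (wm (cond_prob M
      {\<omega>\<in>space M. round_up h (\<alpha> * Y \<omega>) - s > y} {\<omega>\<in>space M. round_up h (\<alpha> * Y \<omega>) > s})) \<partial>lborel)
      \<le> ennreal lam * (ennreal h + ennreal \<alpha> * ?J)"
    unfolding \<sigma>_def by (intro mult_left_mono nn_integral_excess_round_up assms(3,4,6,7)) simp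
  also have "\<dots> = ennreal (lam * h) + ennreal \<alpha> * (ennreal lam * ?J)"
    using assms(1,7) by (simp add: distrib_left ennreal_mult mult.left_commute)
  also have "\<dots> \<le> ennreal (lam * h) + ennreal \<alpha> * ennreal \<theta>"
    by (intro add_left_mono mult_left_mono J) simp
  also have "\<dots> = ennreal (lam * h + \<alpha> * \<theta>)"
    using assms(1,2,6,7) by (simp add: ennreal_plus ennreal_mult)
  also have "\<dots> \<le> ennreal \<theta>" using assms(8) by (rule ennreal_leI)
  finally show "ennreal lam * (\<integral>\<^sup>+ y\<in>{0..}. ennreal (wm (cond_prob M
      {\<omega>\<in>space M. round_up h (\<alpha> * Y \<omega>) - s > y} {\<omega>\<in>space M. round_up h (\<alpha> * Y \<omega>) > s})) \<partial>lborel)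
      \<le> ennreal \<theta>" .
qed

lemma aux_value_le_of_aux_solves:
  fixes Y :: "'a \<Rightarrow> real"
  assumes "0 < \<theta>" "0 < lam" "weighting wm" "aux_solves M \<theta> lam wm X"
    and [measurable]: "Y \<in> borel_measurable M" and "\<And>\<omega>. \<omega> \<in> space M \<Longrightarrow> 0 \<le> Y \<omega>"
    and "aux_constraint M \<theta> lam wm Y"
  shows "aux_value M Y \<le> aux_value M X"
proof (rule ennreal_le_of_mult_le)
  fix \<alpha> :: real assume "0 < \<alpha>" "\<alpha> < 1"
  define h where "h = (1 - \<alpha>) * \<theta> / lam"
  have "0 < h" using \<open>\<alpha> < 1\<close> assms(1,2) by (simp add: h_def)
  have "lam * h + \<alpha> * \<theta> \<le> \<theta>" using assms(2) by (simp add: h_def field_simps)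
  let ?Z = "\<lambda>\<omega>. round_up h (\<alpha> * Y \<omega>)"
  have Y_le_Z: "\<alpha> * Y \<omega> \<le> ?Z \<omega>" for \<omega> using le_round_up[OF \<open>0 < h\<close>] .
  have [measurable]: "?Z \<in> borel_measurable M" unfolding round_up_def by measurable
  have "in_calT M ?Z"
  proof (rule in_calT_discrete[where x = "\<lambda>n. h * real n"])
    show "0 \<le> ?Z \<omega>" if "\<omega> \<in> space M" for \<omega>
      using Y_le_Z[of \<omega>] assms(6)[OF that] \<open>0 < \<alpha>\<close> by (meson order_trans mult_nonneg_nonneg less_imp_le)
    show "?Z \<omega> \<in> range (\<lambda>n. h * real n)" if "\<omega> \<in> space M" for \<omega>
      using assms(6)[OF that] \<open>0 < \<alpha>\<close> by (intro round_up_in_lattice[OF \<open>0 < h\<close>]) simp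
    show "inj (\<lambda>n. h * real n)" using \<open>0 < h\<close> by (auto simp: inj_def)
  qed measurable
  moreover have "aux_constraint M \<theta> lam wm ?Z"
    using assms(1,2,3,7) \<open>0 < \<alpha>\<close> \<open>0 < h\<close> \<open>lam * h + \<alpha> * \<theta> \<le> \<theta>\<close>
    by (intro aux_constraint_round_up) auto
  ultimately have "aux_value M ?Z \<le> aux_value M X"
    using assms(4) by (simp add: aux_solves_def aux_feasible_iff)
  moreover have "ennreal \<alpha> * aux_value M Y \<le> aux_value M ?Z"
    using aux_value_scale[of Y \<alpha>] aux_value_mono[of ?Z "\<lambda>\<omega>. \<alpha> * Y \<omega>"] Y_le_Z \<open>0 < \<alpha>\<close> by simp
  ultimately show "ennreal \<alpha> * aux_value M Y \<le> aux_value M X" by (rule order_trans[rotated])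
qed

end

section \<open>DIR compatibility versus the auxiliary constraint\<close>

context prob_space
begin

lemma revenue_eq_aux_value:
  assumes "dpp M \<tau> T" "AE \<omega> in M. Tbar T (\<tau> \<omega>) \<noteq> top"
  shows "revenue M \<tau> T = aux_value M (\<lambda>\<omega>. enn2real (Tbar T (\<tau> \<omega>)))"
  unfolding revenue_def aux_value_def
proof (intro nn_integral_cong)
  note [measurable] = dppD(4)[OF assms(1)]
  fix y :: real
  have eq: "prob {\<omega>\<in>space M. ennreal y < Tbar T (\<tau> \<omega>)} = prob {\<omega>\<in>space M. y < enn2real (Tbar T (\<tau> \<omega>))}"
    if "0 \<le> y"
  proof (rule finite_measure_eq_AE)
    show "AE \<omega> in M. \<omega> \<in> {\<omega>\<in>space M. ennreal y < Tbar T (\<tau> \<omega>)}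
        \<longleftrightarrow> \<omega> \<in> {\<omega>\<in>space M. y < enn2real (Tbar T (\<tau> \<omega>))}"
      using assms(2) by eventually_elim (auto simp: ennreal_less_iff_less_enn2real that)
    show "{\<omega>\<in>space M. ennreal y < Tbar T (\<tau> \<omega>)} \<in> sets M" by measurable
    show "{\<omega>\<in>space M. y < enn2real (Tbar T (\<tau> \<omega>))} \<in> sets M" by measurable
  qed
  show "ennreal (prob {\<omega>\<in>space M. ennreal y < Tbar T (\<tau> \<omega>)}) * indicator {0..} y =
      ennreal (prob {\<omega>\<in>space M. y < enn2real (Tbar T (\<tau> \<omega>))}) * indicator {0..} y"
  proof (cases "0 \<le> y")
    case True
    show ?thesis unfolding eq[OF True] ..
  qed simp
qed

lemma dir_compat_AE_Tbar_finite:
  assumes "0 < lam" "weighting wm" "dpp M \<tau> T" "dir_compat M \<theta> lam wp wm \<tau> T"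
  shows "AE \<omega> in M. Tbar T (\<tau> \<omega>) \<noteq> top"
proof -
  note dpp = dppD[OF assms(3)]
  note [measurable] = dpp(2,4)
  define N where "N = {\<omega>\<in>space M. Tbar T (\<tau> \<omega>) = top}"
  define C where "C = {\<omega>\<in>space M. \<tau> \<omega> > ereal 0}"
  define A where "A y = {\<omega>\<in>space M. Tbar T (\<tau> \<omega>) - ennreal (T 0) > ennreal y}" for y :: real
  have "prob N = 0"
  proof (rule ccontr)
    \<comment> \<open>On \<open>N\<close> the excess over \<open>T 0\<close> exceeds every level, so the conditional tails at
      \<open>s = 0\<close> are bounded below and their weighted integral is infinite.\<close>
    assume "prob N \<noteq> 0"
    then have "0 < prob N" by (simp add: less_le)
    have NAC: "N \<subseteq> A y \<inter> C" for y
    proof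
      fix \<omega> assume "\<omega> \<in> N"
      then have "\<not> \<tau> \<omega> \<le> ereal 0"
        using Tbar_le_cum_pay[OF dpp(1) dpp(3), of \<omega> 0] by (auto simp: N_def top_unique)
      then show "\<omega> \<in> A y \<inter> C" using \<open>\<omega> \<in> N\<close> by (auto simp: N_def A_def C_def)
    qed
    then have NA: "prob N \<le> prob (A y \<inter> C)" and AC: "prob (A y \<inter> C) \<le> prob C" for y
      by (auto intro!: finite_measure_mono simp: A_def C_def)
    have "0 < prob C" using NA[of 0] AC[of 0] \<open>0 < prob N\<close> by linarith
    have c: "prob N / prob C \<le> cond_prob M (A y) C" for y
      using NA \<open>0 < prob C\<close> by (simp add: cond_prob_def divide_right_mono)
    then have "(\<integral>\<^sup>+ y\<in>{0..}. ennreal (wm (cond_prob M (A y) C)) \<partial>lborel) = top"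
      using c \<open>0 < prob N\<close> \<open>0 < prob C\<close> cond_prob_le_one
      by (intro nn_integral_weighting_top[OF assms(2), where c = "prob N / prob C"]) auto
    moreover have "ennreal lam * (\<integral>\<^sup>+ y\<in>{0..}. ennreal (wm (cond_prob M (A y) C)) \<partial>lborel)
        \<le> ennreal (\<theta> * wp (cond_prob M {\<omega>\<in>space M. \<tau> \<omega> < \<infinity>} C))"
      using assms(4)[unfolded dir_compat_def, rule_format, OF order_refl \<open>0 < prob C\<close>[unfolded C_def]]
      unfolding A_def C_def .
    ultimately show False using assms(1) by (simp add: ennreal_mult_top top_unique)
  qed
  then show ?thesis using prob_Collect_eq_0[of "\<lambda>\<omega>. Tbar T (\<tau> \<omega>) = top"] by (simp add: N_def)
qed

lemma prob_later_eq_prob_Tbar_gt: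
  assumes "dpp M \<tau> T" "AE \<omega> in M. Tbar T (\<tau> \<omega>) \<noteq> top"
    and "0 \<le> t" "T t \<le> s" "\<And>r. t < r \<Longrightarrow> s < T r"
  shows "prob {\<omega>\<in>space M. \<tau> \<omega> > ereal t} = prob {\<omega>\<in>space M. s < enn2real (Tbar T (\<tau> \<omega>))}"
proof -
  note dpp = dppD[OF assms(1)]
  note [measurable] = dpp(2,4)
  show ?thesis
    using assms(2)
    by (intro finite_measure_eq_AE, eventually_elim)
      (auto intro: Tbar_gt_imp_gt[OF dpp(1) dpp(3) assms(4)] gt_imp_Tbar_gt[OF dpp(1) assms(3,5)])
qed

lemma dir_compat_aux_constraint:
  assumes "0 \<le> \<theta>" "weighting wp" "weighting wm" "dpp M \<tau> T" "dir_compat M \<theta> lam wp wm \<tau> T"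
    "AE \<omega> in M. Tbar T (\<tau> \<omega>) \<noteq> top"
  shows "aux_constraint M \<theta> lam wm (\<lambda>\<omega>. enn2real (Tbar T (\<tau> \<omega>)))"
  unfolding aux_constraint_def
proof (intro allI impI)
  note dpp = dppD[OF assms(4)]
  note [measurable] = dpp(2,4)
  let ?Y = "\<lambda>\<omega>. enn2real (Tbar T (\<tau> \<omega>))"
  fix s :: real assume "0 \<le> s" and pos: "0 < prob {\<omega>\<in>space M. ?Y \<omega> > s}"
  then obtain \<omega> where "\<omega> \<in> space M" "s < ?Y \<omega>" by (metis (lifting) Collect_empty_eq measure_empty less_irrefl)
  then obtain r where "0 \<le> r" "s < T r"
    using cum_pay_exceeds_of_Tbar_exceeds[OF dpp(1) dpp(3) \<open>0 \<le> s\<close>] by blast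
  then obtain t where t: "0 \<le> t" "T t \<le> s" "\<And>r. t < r \<Longrightarrow> s < T r"
    using cum_pay_last_le[OF dpp(1) \<open>0 \<le> s\<close>] by blast
  \<comment> \<open>At the last time \<open>t\<close> with \<open>T t \<le> s\<close>, the events \<open>Y > s\<close> and \<open>\<tau> > t\<close> agree
    up to a null set.\<close>
  define C where "C = {\<omega>\<in>space M. \<tau> \<omega> > ereal t}"
  define A where "A y = {\<omega>\<in>space M. Tbar T (\<tau> \<omega>) - ennreal (T t) > ennreal y}" for y :: real
  have C: "prob C = prob {\<omega>\<in>space M. ?Y \<omega> > s}"
    unfolding C_def by (rule prob_later_eq_prob_Tbar_gt[OF assms(4,6) t])
  have sub: "{\<omega>\<in>space M. ?Y \<omega> - s > y} \<inter> {\<omega>\<in>space M. ?Y \<omega> > s} \<subseteq> A y \<inter> C" if "0 \<le> y" for y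
  proof safe
    fix \<omega> assume \<omega>: "\<omega> \<in> space M" "y < ?Y \<omega> - s" "s < ?Y \<omega>"
    then have "Tbar T (\<tau> \<omega>) \<noteq> top" using \<open>0 \<le> s\<close> by auto
    then show "\<omega> \<in> A y"
      using \<omega> t(2) that cum_pay_nonneg[OF dpp(1) t(1)] by (auto simp: A_def ennreal_less_minus_iff)
    show "\<omega> \<in> C" using Tbar_gt_imp_gt[OF dpp(1) dpp(3) t(2)] \<omega> by (auto simp: C_def)
  qed
  have "cond_prob M {\<omega>\<in>space M. ?Y \<omega> - s > y} {\<omega>\<in>space M. ?Y \<omega> > s} \<le> cond_prob M (A y) C"
    if "0 \<le> y" for y
  proof (rule cond_prob_le)
    show "prob ({\<omega>\<in>space M. ?Y \<omega> - s > y} \<inter> {\<omega>\<in>space M. ?Y \<omega> > s}) \<le> prob (A y \<inter> C)"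
      using sub[OF that] by (intro finite_measure_mono) (auto simp: A_def C_def)
  qed (use C pos in simp_all)
  then have "ennreal lam * (\<integral>\<^sup>+ y\<in>{0..}. ennreal (wm (cond_prob M
      {\<omega>\<in>space M. ?Y \<omega> - s > y} {\<omega>\<in>space M. ?Y \<omega> > s})) \<partial>lborel)
      \<le> ennreal lam * (\<integral>\<^sup>+ y\<in>{0..}. ennreal (wm (cond_prob M (A y) C)) \<partial>lborel)"
    using cond_prob_nonneg cond_prob_le_one
    by (intro mult_left_mono nn_integral_weighting_mono[OF assms(3)]) auto
  also have "\<dots> \<le> ennreal (\<theta> * wp (cond_prob M {\<omega>\<in>space M. \<tau> \<omega> < \<infinity>} C))"
    using assms(5)[unfolded dir_compat_def, rule_format, OF t(1)] C pos
    unfolding A_def C_def by simp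
  also have "\<dots> \<le> ennreal \<theta>"
    using assms(1) weighting_le_one[OF assms(2) cond_prob_nonneg cond_prob_le_one]
    by (intro ennreal_leI mult_left_le) auto
  finally show "ennreal lam * (\<integral>\<^sup>+ y\<in>{0..}. ennreal (wm (cond_prob M
      {\<omega>\<in>space M. ?Y \<omega> - s > y} {\<omega>\<in>space M. ?Y \<omega> > s})) \<partial>lborel) \<le> ennreal \<theta>" .
qed

lemma dir_compat_of_aux_constraint:
  assumes "weighting wp" "weighting wm" "dpp M \<tau> T" "AE \<omega> in M. \<tau> \<omega> < \<infinity>"
    "aux_constraint M \<theta> lam wm (\<lambda>\<omega>. enn2real (Tbar T (\<tau> \<omega>)))"
  shows "dir_compat M \<theta> lam wp wm \<tau> T"
  unfolding dir_compat_def
proof (intro allI impI)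
  note dpp = dppD[OF assms(3)]
  note [measurable] = dpp(2,4)
  let ?X = "\<lambda>\<omega>. enn2real (Tbar T (\<tau> \<omega>))"
  fix s :: real assume "0 \<le> s" and pos: "0 < prob {\<omega>\<in>space M. \<tau> \<omega> > ereal s}"
  define C where "C = {\<omega>\<in>space M. \<tau> \<omega> > ereal s}"
  define A where "A y = {\<omega>\<in>space M. Tbar T (\<tau> \<omega>) - ennreal (T s) > ennreal y}" for y :: real
  define D where "D = {\<omega>\<in>space M. ?X \<omega> > T s}"
  define B where "B y = {\<omega>\<in>space M. ?X \<omega> - T s > y}" for y :: real
  have "0 \<le> T s" using cum_pay_nonneg[OF dpp(1) \<open>0 \<le> s\<close>] .
  have "prob ({\<omega>\<in>space M. \<tau> \<omega> < \<infinity>} \<inter> C) = prob C"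
    using assms(4) by (intro finite_measure_eq_AE) (auto simp: C_def)
  then have certain: "cond_prob M {\<omega>\<in>space M. \<tau> \<omega> < \<infinity>} C = 1"
    using pos by (simp add: cond_prob_def C_def)
  have "prob D \<le> prob C"
    using Tbar_gt_imp_gt[OF dpp(1) dpp(3) order_refl]
    by (intro finite_measure_mono) (auto simp: C_def D_def)
  have AC_BD: "prob (A y \<inter> C) \<le> prob (B y \<inter> D)" if "0 \<le> y" for y
  proof (rule finite_measure_mono_AE)
    show "AE \<omega> in M. \<omega> \<in> A y \<inter> C \<longrightarrow> \<omega> \<in> B y \<inter> D"
      using assms(4)
    proof (eventually_elim, intro impI)
      fix \<omega> assume "\<tau> \<omega> < \<infinity>" "\<omega> \<in> A y \<inter> C"
      moreover have "Tbar T (\<tau> \<omega>) \<noteq> top" using Tbar_less_top[of "\<tau> \<omega>" T] \<open>\<tau> \<omega> < \<infinity>\<close> by simp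
      ultimately have "\<omega> \<in> space M" "y < ?X \<omega> - T s"
        using \<open>0 \<le> T s\<close> that by (auto simp: A_def ennreal_less_minus_iff)
      then show "\<omega> \<in> B y \<inter> D" using that by (auto simp: B_def D_def)
    qed
  qed (auto simp: B_def D_def)
  have "cond_prob M (A y) C \<le> cond_prob M (B y) D" if "0 \<le> y" for y
  proof (cases "prob D = 0")
    case True
    then have "prob (A y \<inter> C) = 0"
      using AC_BD[OF that] finite_measure_mono[of "B y \<inter> D" D] by (simp add: D_def measure_le_0_iff)
    then show ?thesis by (simp add: cond_prob_def)
  next
    case False
    then show ?thesis
      using AC_BD[OF that] \<open>prob D \<le> prob C\<close> by (intro cond_prob_le) (auto simp: less_le)
  qed
  then have "ennreal lam * (\<integral>\<^sup>+ y\<in>{0..}. ennreal (wm (cond_prob M (A y) C)) \<partial>lborel)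
      \<le> ennreal lam * (\<integral>\<^sup>+ y\<in>{0..}. ennreal (wm (cond_prob M (B y) D)) \<partial>lborel)"
    using cond_prob_nonneg cond_prob_le_one
    by (intro mult_left_mono nn_integral_weighting_mono[OF assms(2)]) auto
  also have "\<dots> \<le> ennreal \<theta>"
  proof (cases "prob D = 0")
    case False
    then have "0 < prob D" by (simp add: less_le)
    then show ?thesis
      using assms(5)[unfolded aux_constraint_def, rule_format, OF \<open>0 \<le> T s\<close>]
      unfolding B_def D_def by simp
  qed (simp add: nn_integral_weighting_cond_prob_null[OF assms(2)])
  finally show "ennreal lam * (\<integral>\<^sup>+ y\<in>{0..}. ennreal (wm (cond_prob M
      {\<omega>\<in>space M. Tbar T (\<tau> \<omega>) - ennreal (T s) > ennreal y} {\<omega>\<in>space M. \<tau> \<omega> > ereal s})) \<partial>lborel)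
    \<le> ennreal (\<theta> * wp (cond_prob M {\<omega>\<in>space M. \<tau> \<omega> < \<infinity>} {\<omega>\<in>space M. \<tau> \<omega> > ereal s}))"
    using certain weighting_one[OF assms(1)] by (simp add: A_def C_def)
qed

end

theorem lemma4:
  fixes M :: "'a measure" and \<theta> lam :: real and wp wm :: "real \<Rightarrow> real"
    and \<tau> :: "'a \<Rightarrow> ereal" and T :: "real \<Rightarrow> real"
  assumes "prob_space M"
    and "\<theta> > 0" and "lam > 0"
    and "weighting wp" and "weighting wm"
    and "dpp M \<tau> T"
    and "measure M {\<omega>\<in>space M. \<tau> \<omega> < \<infinity>} = 1"
    and "aux_solves M \<theta> lam wm (\<lambda>\<omega>. enn2real (Tbar T (\<tau> \<omega>)))"
  shows "optimal_dpp M \<theta> lam wp wm \<tau> T"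
proof -
  interpret prob_space M by fact
  have finite: "AE \<omega> in M. \<tau> \<omega> < \<infinity>"
    using assms(7) dppD(2)[OF assms(6)] by (subst prob_Collect_eq_1[symmetric]) auto
  then have payment_finite: "AE \<omega> in M. Tbar T (\<tau> \<omega>) \<noteq> top"
    by eventually_elim (simp add: less_top Tbar_less_top)
  have "dir_compat M \<theta> lam wp wm \<tau> T"
    using assms(4,5,6,8) finite
    by (intro dir_compat_of_aux_constraint) (auto simp: aux_solves_def aux_feasible_iff)
  moreover have "revenue M \<tau>' T' \<le> revenue M \<tau> T"
    if "dpp M \<tau>' T'" "dir_compat M \<theta> lam wp wm \<tau>' T'" for \<tau>' T'
  proof -
    let ?Y = "\<lambda>\<omega>. enn2real (Tbar T' (\<tau>' \<omega>))"
    have "AE \<omega> in M. Tbar T' (\<tau>' \<omega>) \<noteq> top"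
      using assms(3,5) that by (rule dir_compat_AE_Tbar_finite)
    then have "revenue M \<tau>' T' = aux_value M ?Y" and "aux_constraint M \<theta> lam wm ?Y"
      using assms(2,4,5) that by (auto intro: revenue_eq_aux_value dir_compat_aux_constraint)
    moreover have "aux_value M ?Y \<le> aux_value M (\<lambda>\<omega>. enn2real (Tbar T (\<tau> \<omega>)))"
      using dppD(4)[OF that(1)] \<open>aux_constraint M \<theta> lam wm ?Y\<close>
      by (intro aux_value_le_of_aux_solves[OF assms(2,3,5,8)]) auto
    ultimately show ?thesis using revenue_eq_aux_value[OF assms(6) payment_finite] by simp
  qed
  ultimately show ?thesis using assms(6) by (simp add: optimal_dpp_def)
qed

end
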